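(* Let $X$ be a $T_1$ topological space. An element $f\in T''(X)$ is a unit of the ring $T''(X)$ if and only if $Z(f)=\{x\in X: f(x)=0\}=\emptyset$.
   Context: $C(X)$ is the ring of real-valued continuous functions on $X$; a cozero set is a set $\{x: g(x)\neq 0\}$ with $g\in C(X)$. $T''(X)$ is the ring (under pointwise operations) of all functions $f\colon X\to\mathbb{R}$ for which there is a dense cozero set $U$ of $X$ with $f|_U$ continuous. *)

theory Defs
  imports "HOL-Analysis.Analysis"
begin

text \<open>The space X is the whole type 'a, a T1 space (type class t1_space).\<close>

definition cozero_set :: "('a::topological_space \<Rightarrow> real) \<Rightarrow> 'a set" where
  "cozero_set g = {x. g x \<noteq> 0}"

definition is_cozero :: "'a::topological_space set \<Rightarrow> bool" where
  "is_cozero U \<longleftrightarrow> (\<exists>g::'a \<Rightarrow> real. continuous_on UNIV g \<and> U = cozero_set g)"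

definition Tpp :: "('a::topological_space \<Rightarrow> real) set" where
  "Tpp = {f. \<exists>U. is_cozero U \<and> closure U = UNIV \<and> continuous_on U f}"

definition Tpp_unit :: "('a::topological_space \<Rightarrow> real) \<Rightarrow> bool" where
  "Tpp_unit f \<longleftrightarrow> f \<in> Tpp \<and> (\<exists>g\<in>Tpp. (\<lambda>x. f x * g x) = (\<lambda>x. 1))"

end

theory Submission
  imports Defs
begin

text \<open>The pointwise inverse of a nowhere vanishing f is continuous wherever f is, so it lies in
  T''(X) via the same dense cozero set; conversely f g = 1 forbids zeros.\<close>

lemma Tpp_inverse:
  assumes "f \<in> Tpp" and "\<And>x. f x \<noteq> 0"
  shows "(\<lambda>x. inverse (f x)) \<in> Tpp"
proof -
  from \<open>f \<in> Tpp\<close> obtain U where "is_cozero U" "closure U = UNIV" "continuous_on U f"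
    unfolding Tpp_def by blast
  moreover have "continuous_on U (\<lambda>x. inverse (f x))"
    using \<open>continuous_on U f\<close> assms(2) by (intro continuous_on_inverse) auto
  ultimately show ?thesis
    unfolding Tpp_def by blast
qed

lemma Tpp_unit_nonzero:
  assumes "Tpp_unit f"
  shows "f x \<noteq> 0"
proof -
  from assms obtain g where "(\<lambda>x. f x * g x) = (\<lambda>x. 1)"
    unfolding Tpp_unit_def by blast
  then have "f x * g x = 1"
    by (rule fun_cong)
  then show ?thesis
    by auto
qed

lemma Tpp_unit_iff_nonzero:
  fixes f :: "'a::topological_space \<Rightarrow> real"
  assumes "f \<in> Tpp"
  shows "Tpp_unit f \<longleftrightarrow> (\<forall>x. f x \<noteq> 0)"
proof
  assume "\<forall>x. f x \<noteq> 0"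
  then have "(\<lambda>x. f x * inverse (f x)) = (\<lambda>x. 1)"
    by auto
  moreover have "(\<lambda>x. inverse (f x)) \<in> Tpp"
    using assms \<open>\<forall>x. f x \<noteq> 0\<close> by (blast intro: Tpp_inverse)
  ultimately show "Tpp_unit f"
    unfolding Tpp_unit_def using assms by (intro conjI bexI[of _ "\<lambda>x. inverse (f x)"])
qed (use Tpp_unit_nonzero in blast)

theorem theorem2p3:
  fixes f :: "'a::t1_space \<Rightarrow> real"
  assumes "f \<in> Tpp"
  shows "Tpp_unit f \<longleftrightarrow> {x. f x = 0} = {}"
  using Tpp_unit_iff_nonzero[OF assms] by auto

end
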